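(* Let $k$ be an algebraically closed field, let $L$ and $G$ be finite groups with $G$ acting on $L$ by group automorphisms (and $L$ acting trivially on $G$), and let $K=kL\natural^{\tau}_{\sigma}k^G$ be the crossed coproduct Hopf algebra determined by normalized $2$-cocycles $\sigma$ and $\tau$ as described in the context. Let $M$, $N$ be finite dimensional $K$-modules. Then for each $x\in G$ there are isomorphisms of $k^{\sigma_x}L$-modules \begin{itemize} \item[(i)] $(M\otimes N)_x\simeq \bigoplus_{y,z\in G,\ yz=x} M_y\otimes {}^{y}N_z$, and \item[(ii)] $(M^* )_x\simeq {}^{x}(M_{x^{-1}})^*$, \end{itemize} where the right hand sides are regarded as $k^{\sigma_x}L$-modules as explained in the context.
   Context: $k^G=\mathrm{Hom}_k(kG,k)$ has basis $\{p_x:x\in G\}$ dual to $G$, with $p_xp_y=\delta_{x,y}p_x$. A normalized 2-cocycle $\sigma:L\times L\to (k^G)^\times$ is written $\sigma(l,m)=\sum_{x\in G}\sigma_x(l,m)p_x$ with $\sigma(l,m)\sigma(lm,n)=\sigma(m,n)\sigma(l,mn)$ and $\sigma(1,l)=\sigma(l,1)=1$; each $\sigma_x:L\times L\to k^\times$ is then a normalized 2-cocycle. A normalized 2-cocycle $\tau:L\to k^G\otimes k^G$ is $\tau(l)=\sum_{x,y}\tau_{x,y}(l)p_x\otimes p_y$ with $\tau_{x,y}:L\to k^\times$ satisfying $\tau_{xy,z}(l)\tau_{x,y}(l)=\tau_{x,yz}(l)\tau_{y,z}(x^{-1}\cdot l)$ and $\tau_{1,x}=\tau_{x,1}=1$.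 It is assumed that $\sigma_{xy}(l,m)\tau_{x,y}(lm)=\sigma_x(l,m)\sigma_y(x^{-1}\cdot l,x^{-1}\cdot m)\tau_{x,y}(l)\tau_{x,y}(m)$ for all $l,m\in L$, $x,y\in G$. The crossed coproduct $K=kL\natural^\tau_\sigma k^G$ is $kL\otimes k^G$ (elements $l\natural p_x$) with product $(l\natural p_x)(m\natural p_y)=\delta_{x,y}\sigma_x(l,m)\,lm\natural p_x$, coproduct $\Delta(l\natural p_x)=\sum_{y\in G}\tau_{y,y^{-1}x}(l)(l\natural p_y)\otimes((y^{-1}\cdot l)\natural p_{y^{-1}x})$, counit $\varepsilon(l\natural p_x)=\delta_{1,x}$ and antipode $S(l\natural p_x)=\tau_{x,x^{-1}}(l^{-1})\sigma_x(l^{-1},l)(x^{-1}\cdot l^{-1})\natural p_{x^{-1}}$. For a 2-cocycle $\alpha:L\times L\to k^\times$, the twisted group algebra $k^\alpha L$ has basis $\{\overline{l}:l\in L\}$ with $\overline{l}\,\overline{m}=\alpha(l,m)\overline{lm}$; the subalgebra $kL\cdot p_x$ of $K$ is identified with $k^{\sigma_x}L$ via $l\natural p_x\mapsto \overline{l}$. For a $K$-module $M$, $M_x=p_x\cdot M$ is a $k^{\sigma_x}L$-module. For $y\in G$ and a 2-cocycle $\alpha$, ${}^y\alpha(l,m)=\alpha(y^{-1}\cdot l,y^{-1}\cdot m)$, and the conjugate ${}^yM_z$ is $M_z$ as a vector space with $k^{{}^y\sigma_z}L$-module structure $\overline{l}\cdot_y v=\overline{y^{-1}\cdot l}\cdot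 v$. The tensor product of a $k^\alpha L$-module and a $k^\beta L$-module is a $k^{\alpha\beta}L$-module with $\overline{l}$ acting as $\overline{l}\otimes\overline{l}$; the dual of a $k^\alpha L$-module $U$ is a $k^{\alpha^{-1}}L$-module via $(\overline{l}\cdot f)(u)=f(\overline{l}^{-1}u)$. Thus $M_y\otimes{}^yN_z$ is a $k^{\sigma_y\,{}^y\sigma_z}L$-module, made into a $k^{\sigma_{yz}}L$-module via the algebra isomorphism $k^{\sigma_{yz}}L\to k^{\sigma_y\,{}^y\sigma_z}L$, $\overline{l}\mapsto\tau_{y,z}(l)\overline{l}$; and ${}^x(M_{x^{-1}})^*$ is a $k^{{}^x\sigma_{x^{-1}}^{-1}}L$-module, made into a $k^{\sigma_x}L$-module via the algebra isomorphism $k^{\sigma_x}L\to k^{{}^x\sigma_{x^{-1}}^{-1}}L$, $\overline{l}\mapsto \tau_{x,x^{-1}}^{-1}(l)\overline{l}$. $M^*=\mathrm{Hom}_k(M,k)$ with $(b\cdot f)(m)=f(S(b)m)$. *)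

theory Defs
  imports "HOL-Algebra.Group" "HOL-Computational_Algebra.Polynomial"
begin

definition alg_closed :: "'k::field itself \<Rightarrow> bool" where
  "alg_closed _ \<longleftrightarrow> (\<forall>p::'k poly. 0 < degree p \<longrightarrow> (\<exists>z. poly p z = 0))"

text \<open>sig x l m stands for sigma_x(l,m); tau x y l stands for tau_{x,y}(l);
  act y l stands for y . l.\<close>

definition crossed_coproduct_data ::
  "('l,'e1) monoid_scheme \<Rightarrow> ('g,'e2) monoid_scheme \<Rightarrow> ('g \<Rightarrow> 'l \<Rightarrow> 'l)
   \<Rightarrow> ('g \<Rightarrow> 'l \<Rightarrow> 'l \<Rightarrow> 'k::field) \<Rightarrow> ('g \<Rightarrow> 'g \<Rightarrow> 'l \<Rightarrow> 'k) \<Rightarrow> bool" where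
  "crossed_coproduct_data L G act sig tau \<longleftrightarrow>
     group L \<and> group G \<and> finite (carrier L) \<and> finite (carrier G) \<and>
     (\<forall>y\<in>carrier G. act y \<in> hom L L \<and> bij_betw (act y) (carrier L) (carrier L)) \<and>
     (\<forall>l\<in>carrier L. act \<one>\<^bsub>G\<^esub> l = l) \<and>
     (\<forall>x\<in>carrier G. \<forall>y\<in>carrier G. \<forall>l\<in>carrier L. act (x \<otimes>\<^bsub>G\<^esub> y) l = act x (act y l)) \<and>
     (\<forall>x\<in>carrier G. \<forall>l\<in>carrier L. \<forall>m\<in>carrier L. sig x l m \<noteq> 0) \<and>
     (\<forall>x\<in>carrier G. \<forall>l\<in>carrier L. \<forall>m\<in>carrier L. \<forall>n\<in>carrier L.
        sig x l m * sig x (l \<otimes>\<^bsub>L\<^esub> m) n = sig x m n * sig x l (m \<otimes>\<^bsub>L\<^esub> n)) \<and>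
     (\<forall>x\<in>carrier G. \<forall>l\<in>carrier L. sig x \<one>\<^bsub>L\<^esub> l = 1 \<and> sig x l \<one>\<^bsub>L\<^esub> = 1) \<and>
     (\<forall>x\<in>carrier G. \<forall>y\<in>carrier G. \<forall>l\<in>carrier L. tau x y l \<noteq> 0) \<and>
     (\<forall>x\<in>carrier G. \<forall>y\<in>carrier G. \<forall>z\<in>carrier G. \<forall>l\<in>carrier L.
        tau (x \<otimes>\<^bsub>G\<^esub> y) z l * tau x y l = tau x (y \<otimes>\<^bsub>G\<^esub> z) l * tau y z (act (inv\<^bsub>G\<^esub> x) l)) \<and>
     (\<forall>x\<in>carrier G. \<forall>l\<in>carrier L. tau \<one>\<^bsub>G\<^esub> x l = 1 \<and> tau x \<one>\<^bsub>G\<^esub> l = 1) \<and>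
     (\<forall>x\<in>carrier G. \<forall>y\<in>carrier G. \<forall>l\<in>carrier L. \<forall>m\<in>carrier L.
        sig (x \<otimes>\<^bsub>G\<^esub> y) l m * tau x y (l \<otimes>\<^bsub>L\<^esub> m)
        = sig x l m * sig y (act (inv\<^bsub>G\<^esub> x) l) (act (inv\<^bsub>G\<^esub> x) m) * tau x y l * tau x y m)"

text \<open>Vectors of k^I (I a finite index set) are functions vanishing outside I;
  matrices are functions I x I -> k.\<close>

definition vecs :: "'a set \<Rightarrow> ('a \<Rightarrow> 'k::zero) set" where
  "vecs I = {v. \<forall>i. i \<notin> I \<longrightarrow> v i = 0}"

definition mv :: "'a set \<Rightarrow> ('a \<Rightarrow> 'a \<Rightarrow> 'k::comm_ring_1) \<Rightarrow> ('a \<Rightarrow> 'k) \<Rightarrow> ('a \<Rightarrow> 'k)" where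
  "mv I A v = (\<lambda>i. if i \<in> I then (\<Sum>j\<in>I. A i j * v j) else 0)"

definition kron :: "('a \<Rightarrow> 'a \<Rightarrow> 'k::times) \<Rightarrow> ('b \<Rightarrow> 'b \<Rightarrow> 'k) \<Rightarrow> ('a \<times> 'b) \<Rightarrow> ('a \<times> 'b) \<Rightarrow> 'k" where
  "kron A B = (\<lambda>(i,j) (i',j'). A i i' * B j j')"

definition lin_span :: "('x \<Rightarrow> 'k::comm_ring_1) set \<Rightarrow> ('x \<Rightarrow> 'k) set" where
  "lin_span S = {(\<lambda>p. \<Sum>t\<in>T. c t * t p) | T c. finite T \<and> T \<subseteq> S}"

definition lin_on :: "('x \<Rightarrow> 'k::comm_ring_1) set \<Rightarrow> (('x \<Rightarrow> 'k) \<Rightarrow> ('y \<Rightarrow> 'k)) \<Rightarrow> bool" where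
  "lin_on V f \<longleftrightarrow>
     (\<forall>u\<in>V. \<forall>v\<in>V. f (\<lambda>p. u p + v p) = (\<lambda>q. f u q + f v q)) \<and>
     (\<forall>c. \<forall>u\<in>V. f (\<lambda>p. c * u p) = (\<lambda>q. c * f u q))"

definition lin_functional :: "('x \<Rightarrow> 'k::comm_ring_1) set \<Rightarrow> (('x \<Rightarrow> 'k) \<Rightarrow> 'k) \<Rightarrow> bool" where
  "lin_functional V f \<longleftrightarrow>
     (\<forall>u\<in>V. \<forall>v\<in>V. f (\<lambda>p. u p + v p) = f u + f v) \<and>
     (\<forall>c. \<forall>u\<in>V. f (\<lambda>p. c * u p) = c * f u)"

text \<open>Tensor product of subspaces U of k^X and W of k^Y, realised inside k^(X x Y).\<close>
definition tensor_sub :: "('x \<Rightarrow> 'k::comm_ring_1) set \<Rightarrow> ('y \<Rightarrow> 'k) set \<Rightarrow> ('x \<times> 'y \<Rightarrow> 'k) set" where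
  "tensor_sub U W = lin_span {(\<lambda>(i,j). u i * w j) | u w. u \<in> U \<and> w \<in> W}"

definition dual_space :: "('x \<Rightarrow> 'k::comm_ring_1) set \<Rightarrow> (('x \<Rightarrow> 'k) \<Rightarrow> 'k) set" where
  "dual_space U = {f. lin_functional U f \<and> (\<forall>v. v \<notin> U \<longrightarrow> f v = 0)}"

text \<open>Isomorphism of modules over a twisted group algebra k^alpha L, where the module
  structures are given by the actions of the basis elements bar l.\<close>
definition tw_iso :: "'l set \<Rightarrow> ('x \<Rightarrow> 'k::comm_ring_1) set \<Rightarrow> ('l \<Rightarrow> ('x \<Rightarrow> 'k) \<Rightarrow> ('x \<Rightarrow> 'k))
    \<Rightarrow> ('y \<Rightarrow> 'k) set \<Rightarrow> ('l \<Rightarrow> ('y \<Rightarrow> 'k) \<Rightarrow> ('y \<Rightarrow> 'k)) \<Rightarrow> bool" where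
  "tw_iso Ls V a W b \<longleftrightarrow>
     (\<exists>f. lin_on V f \<and> bij_betw f V W \<and> (\<forall>l\<in>Ls. \<forall>v\<in>V. f (a l v) = b l (f v)))"

text \<open>A finite dimensional K-module is given on k^I (I finite) by the matrices
  rho l x of the basis elements l # p_x of K, subject to the multiplication rule
  of K and the requirement that the unit 1_K = sum_x 1 # p_x acts as identity.\<close>
definition K_module :: "('l,'e1) monoid_scheme \<Rightarrow> ('g,'e2) monoid_scheme
    \<Rightarrow> ('g \<Rightarrow> 'l \<Rightarrow> 'l \<Rightarrow> 'k::field) \<Rightarrow> 'a set \<Rightarrow> ('l \<Rightarrow> 'g \<Rightarrow> 'a \<Rightarrow> 'a \<Rightarrow> 'k) \<Rightarrow> bool" where
  "K_module L G sig I rho \<longleftrightarrow> finite I \<and>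
     (\<forall>l\<in>carrier L. \<forall>m\<in>carrier L. \<forall>x\<in>carrier G. \<forall>y\<in>carrier G. \<forall>v\<in>vecs I.
        mv I (rho l x) (mv I (rho m y) v)
        = (if x = y then (\<lambda>i. sig x l m * mv I (rho (l \<otimes>\<^bsub>L\<^esub> m) x) v i) else (\<lambda>i. 0))) \<and>
     (\<forall>v\<in>vecs I. (\<lambda>i. \<Sum>x\<in>carrier G. mv I (rho \<one>\<^bsub>L\<^esub> x) v i) = v)"

text \<open>Matrices of l # p_x on M tensor N (via the coproduct of K).\<close>
definition tensor_rho :: "('g,'e2) monoid_scheme \<Rightarrow> ('g \<Rightarrow> 'l \<Rightarrow> 'l) \<Rightarrow> ('g \<Rightarrow> 'g \<Rightarrow> 'l \<Rightarrow> 'k::field)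
    \<Rightarrow> ('l \<Rightarrow> 'g \<Rightarrow> 'a \<Rightarrow> 'a \<Rightarrow> 'k) \<Rightarrow> ('l \<Rightarrow> 'g \<Rightarrow> 'b \<Rightarrow> 'b \<Rightarrow> 'k)
    \<Rightarrow> 'l \<Rightarrow> 'g \<Rightarrow> ('a \<times> 'b) \<Rightarrow> ('a \<times> 'b) \<Rightarrow> 'k" where
  "tensor_rho G act tau rhoM rhoN l x =
     (\<lambda>(i,j) (i',j'). \<Sum>y\<in>carrier G.
        tau y (inv\<^bsub>G\<^esub> y \<otimes>\<^bsub>G\<^esub> x) l * rhoM l y i i'
        * rhoN (act (inv\<^bsub>G\<^esub> y) l) (inv\<^bsub>G\<^esub> y \<otimes>\<^bsub>G\<^esub> x) j j')"

text \<open>Matrices of l # p_x on M^* in the dual basis: (b.f)(m) = f(S(b) m), i.e. the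
  transpose of the matrix of S(l # p_x).\<close>
definition dual_rho :: "('l,'e1) monoid_scheme \<Rightarrow> ('g,'e2) monoid_scheme \<Rightarrow> ('g \<Rightarrow> 'l \<Rightarrow> 'l)
    \<Rightarrow> ('g \<Rightarrow> 'l \<Rightarrow> 'l \<Rightarrow> 'k::field) \<Rightarrow> ('g \<Rightarrow> 'g \<Rightarrow> 'l \<Rightarrow> 'k)
    \<Rightarrow> ('l \<Rightarrow> 'g \<Rightarrow> 'a \<Rightarrow> 'a \<Rightarrow> 'k) \<Rightarrow> 'l \<Rightarrow> 'g \<Rightarrow> 'a \<Rightarrow> 'a \<Rightarrow> 'k" where
  "dual_rho L G act sig tau rho l x =
     (\<lambda>i j. tau x (inv\<^bsub>G\<^esub> x) (inv\<^bsub>L\<^esub> l) * sig x (inv\<^bsub>L\<^esub> l) l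
            * rho (act (inv\<^bsub>G\<^esub> x) (inv\<^bsub>L\<^esub> l)) (inv\<^bsub>G\<^esub> x) j i)"

text \<open>The component M_x = p_x . M as a k^{sigma_x}L-module (bar l acts as l # p_x).\<close>
definition comp_space :: "('l,'e1) monoid_scheme \<Rightarrow> 'a set \<Rightarrow> ('l \<Rightarrow> 'g \<Rightarrow> 'a \<Rightarrow> 'a \<Rightarrow> 'k::field)
    \<Rightarrow> 'g \<Rightarrow> ('a \<Rightarrow> 'k) set" where
  "comp_space L I rho x = mv I (rho \<one>\<^bsub>L\<^esub> x) ` vecs I"

definition comp_act :: "'a set \<Rightarrow> ('l \<Rightarrow> 'g \<Rightarrow> 'a \<Rightarrow> 'a \<Rightarrow> 'k::field) \<Rightarrow> 'g
    \<Rightarrow> 'l \<Rightarrow> ('a \<Rightarrow> 'k) \<Rightarrow> ('a \<Rightarrow> 'k)" where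
  "comp_act I rho x l = mv I (rho l x)"

text \<open>The direct sum over y in G (z = y^{-1} x) of M_y tensor ^yN_z, realised in
  k^(G x I x J); the summand indexed by y is (\<lambda>p. w (y,p)).\<close>
definition sum_space :: "('l,'e1) monoid_scheme \<Rightarrow> ('g,'e2) monoid_scheme \<Rightarrow> 'a set \<Rightarrow> 'b set
    \<Rightarrow> ('l \<Rightarrow> 'g \<Rightarrow> 'a \<Rightarrow> 'a \<Rightarrow> 'k::field) \<Rightarrow> ('l \<Rightarrow> 'g \<Rightarrow> 'b \<Rightarrow> 'b \<Rightarrow> 'k) \<Rightarrow> 'g
    \<Rightarrow> ('g \<times> ('a \<times> 'b) \<Rightarrow> 'k) set" where
  "sum_space L G I J rhoM rhoN x =
     {w. (\<forall>y p. y \<notin> carrier G \<longrightarrow> w (y,p) = 0) \<and>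
         (\<forall>y\<in>carrier G. (\<lambda>p. w (y,p)) \<in>
            tensor_sub (comp_space L I rhoM y) (comp_space L J rhoN (inv\<^bsub>G\<^esub> y \<otimes>\<^bsub>G\<^esub> x)))}"

text \<open>On the summand M_y tensor ^yN_z, bar l acts as
  tau_{y,z}(l) (bar l tensor bar(y^{-1}.l)).\<close>
definition sum_act :: "('g,'e2) monoid_scheme \<Rightarrow> ('g \<Rightarrow> 'l \<Rightarrow> 'l) \<Rightarrow> ('g \<Rightarrow> 'g \<Rightarrow> 'l \<Rightarrow> 'k::field)
    \<Rightarrow> 'a set \<Rightarrow> 'b set \<Rightarrow> ('l \<Rightarrow> 'g \<Rightarrow> 'a \<Rightarrow> 'a \<Rightarrow> 'k) \<Rightarrow> ('l \<Rightarrow> 'g \<Rightarrow> 'b \<Rightarrow> 'b \<Rightarrow> 'k) \<Rightarrow> 'g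
    \<Rightarrow> 'l \<Rightarrow> ('g \<times> ('a \<times> 'b) \<Rightarrow> 'k) \<Rightarrow> ('g \<times> ('a \<times> 'b) \<Rightarrow> 'k)" where
  "sum_act G act tau I J rhoM rhoN x l w =
     (\<lambda>(y,p). if y \<in> carrier G then
        tau y (inv\<^bsub>G\<^esub> y \<otimes>\<^bsub>G\<^esub> x) l
        * mv (I \<times> J) (kron (rhoM l y) (rhoN (act (inv\<^bsub>G\<^esub> y) l) (inv\<^bsub>G\<^esub> y \<otimes>\<^bsub>G\<^esub> x)))
             (\<lambda>q. w (y,q)) p
      else 0)"

text \<open>U = M_{x^{-1}} is a k^{sigma_{x^{-1}}}L-module; its x-conjugate has bar l acting as
  bar m with m = x^{-1}.l; the dual has (bar l . f)(u) = f(bar m^{-1} u) with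
  bar m^{-1} = sigma_{x^{-1}}(m^{-1},m)^{-1} bar(m^{-1}); finally bar l acts through
  tau_{x,x^{-1}}(l)^{-1} bar l.\<close>
definition conj_dual_act :: "('l,'e1) monoid_scheme \<Rightarrow> ('g,'e2) monoid_scheme \<Rightarrow> ('g \<Rightarrow> 'l \<Rightarrow> 'l)
    \<Rightarrow> ('g \<Rightarrow> 'l \<Rightarrow> 'l \<Rightarrow> 'k::field) \<Rightarrow> ('g \<Rightarrow> 'g \<Rightarrow> 'l \<Rightarrow> 'k)
    \<Rightarrow> 'a set \<Rightarrow> ('l \<Rightarrow> 'g \<Rightarrow> 'a \<Rightarrow> 'a \<Rightarrow> 'k) \<Rightarrow> 'g
    \<Rightarrow> 'l \<Rightarrow> (('a \<Rightarrow> 'k) \<Rightarrow> 'k) \<Rightarrow> (('a \<Rightarrow> 'k) \<Rightarrow> 'k)" where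
  "conj_dual_act L G act sig tau I rho x l f =
     (let m = act (inv\<^bsub>G\<^esub> x) l; xi = inv\<^bsub>G\<^esub> x in
      (\<lambda>v. if v \<in> comp_space L I rho xi then
              inverse (tau x xi l)
              * f (\<lambda>i. inverse (sig xi (inv\<^bsub>L\<^esub> m) m) * mv I (rho (inv\<^bsub>L\<^esub> m) xi) v i)
           else 0))"

end

theory Submission
  imports Defs
begin

text \<open>The unit of K is the sum of the orthogonal idempotents 1 # p_x, so every K-module is the
  direct sum of its components M_x, each the image of the idempotent matrix of 1 # p_x.
  By the coproduct formula, 1 # p_x acts on M \<otimes> N as the sum over y of the orthogonal
  idempotents (1 # p_y) \<otimes> (1 # p_(y^-1 x)), whose images are the summands M_y \<otimes> N_(y^-1 x);
  on the summand indexed by y, l # p_x acts as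
  tau_(y,y^-1 x)(l) (l # p_y) \<otimes> ((y^-1 . l) # p_(y^-1 x)), which is the twisted action on
  M_y \<otimes> ^yN_(y^-1 x). For the dual, 1 # p_x acts on M^* by the transpose of the idempotent of
  1 # p_(x^-1), so (M^*)_x is the dual of M_(x^-1) under the evaluation pairing, and the
  compatibility of sigma and tau turns the antipode scalar tau_(x,x^-1)(l^-1) sigma_x(l^-1,l)
  into the scalars of the conjugated dual action.\<close>

definition unit_vec :: "'a \<Rightarrow> 'a \<Rightarrow> 'k::comm_ring_1" where
  "unit_vec i = (\<lambda>p. if p = i then 1 else 0)"

definition idem_on :: "'a set \<Rightarrow> ('a \<Rightarrow> 'a \<Rightarrow> 'k::comm_ring_1) \<Rightarrow> bool" where
  "idem_on I P \<longleftrightarrow> (\<forall>v\<in>vecs I. mv I P (mv I P v) = mv I P v)"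

lemma idem_onD: "idem_on I P \<Longrightarrow> v \<in> vecs I \<Longrightarrow> mv I P (mv I P v) = mv I P v"
  by (simp add: idem_on_def)

lemma mv_in_vecs: "mv I A v \<in> vecs I"
  by (simp add: mv_def vecs_def)

lemma unit_vec_in_vecs: "i \<in> I \<Longrightarrow> unit_vec i \<in> vecs I"
  by (simp add: unit_vec_def vecs_def)

lemma mv_add: "mv I A (\<lambda>p. u p + v p) = (\<lambda>i. mv I A u i + mv I A v i)"
  by (auto simp: mv_def distrib_left sum.distrib)

lemma mv_scale: "mv I A (\<lambda>p. c * v p) = (\<lambda>i. c * mv I A v i)"
  by (auto simp: mv_def sum_distrib_left mult.left_commute)

lemma mv_sum: "mv I A (\<lambda>p. \<Sum>y\<in>S. g y p) = (\<lambda>i. \<Sum>y\<in>S. mv I A (g y) i)"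
  by (rule ext) (auto simp: mv_def sum_distrib_left intro: sum.swap)

lemma mv_lincomb: "mv I A (\<lambda>p. \<Sum>y\<in>S. c y * g y p) = (\<lambda>i. \<Sum>y\<in>S. c y * mv I A (g y) i)"
  by (simp add: mv_sum mv_scale)

lemma mv_mat_lincomb:
  "mv I (\<lambda>p q. \<Sum>y\<in>S. c y * M y p q) v = (\<lambda>i. \<Sum>y\<in>S. c y * mv I (M y) v i)"
  by (rule ext) (auto simp: mv_def sum_distrib_left sum_distrib_right mult.assoc intro: sum.swap)

lemma mv_mat_sum: "mv I (\<lambda>p q. \<Sum>y\<in>S. M y p q) v = (\<lambda>i. \<Sum>y\<in>S. mv I (M y) v i)"
  using mv_mat_lincomb[where c="\<lambda>_. 1"] by simp

lemma mv_unit_vec: "finite I \<Longrightarrow> j \<in> I \<Longrightarrow> mv I A (unit_vec j) k = (if k \<in> I then A k j else 0)"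
  by (simp add: mv_def unit_vec_def if_distrib cong: if_cong)

lemma unit_vec_expansion: "finite I \<Longrightarrow> v \<in> vecs I \<Longrightarrow> (\<lambda>p. \<Sum>i\<in>I. v i * unit_vec i p) = v"
  by (rule ext) (auto simp: unit_vec_def vecs_def if_distrib cong: if_cong)

lemma mv_expansion:
  "finite I \<Longrightarrow> v \<in> vecs I \<Longrightarrow> mv I A v = (\<lambda>p. \<Sum>i\<in>I. v i * mv I A (unit_vec i) p)"
  by (metis (no_types) mv_lincomb unit_vec_expansion)

lemma sum_mv_transpose:
  "(\<Sum>i\<in>I. mv I (\<lambda>i j. c * A j i) v i * u i) = c * (\<Sum>j\<in>I. v j * mv I A u j)"
proof -
  have "(\<Sum>i\<in>I. mv I (\<lambda>i j. c * A j i) v i * u i) = (\<Sum>i\<in>I. \<Sum>j\<in>I. c * (v j * (A j i * u i)))"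
    by (auto simp: mv_def sum_distrib_right mult.assoc mult.left_commute intro!: sum.cong)
  also have "\<dots> = (\<Sum>j\<in>I. \<Sum>i\<in>I. c * (v j * (A j i * u i)))"
    by (rule sum.swap)
  also have "\<dots> = c * (\<Sum>j\<in>I. v j * mv I A u j)"
    by (auto simp: mv_def sum_distrib_left intro!: sum.cong)
  finally show ?thesis .
qed

lemma sum_mv_transpose_one:
  "(\<Sum>i\<in>I. mv I (\<lambda>i j. A j i) v i * u i) = (\<Sum>j\<in>I. v j * mv I A u j)"
  using sum_mv_transpose[where c=1] by simp

lemma mv_kron:
  assumes "finite I" "finite J"
  shows "mv (I \<times> J) (kron A B) w = (\<lambda>(i,j). mv I A (\<lambda>i'. mv J B (\<lambda>j'. w (i',j')) j) i)"
  using assms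
  by (auto simp: mv_def kron_def sum_distrib_left mult.assoc sum.cartesian_product split_def)

lemma mv_kron_product:
  assumes "finite I" "finite J"
  shows "mv (I \<times> J) (kron A B) (\<lambda>(i,j). u i * w j) = (\<lambda>(i,j). mv I A u i * mv J B w j)"
proof -
  have "mv I A (\<lambda>i'. u i' * c) = (\<lambda>i. mv I A u i * c)" for c
    using mv_scale[of I A c u] by (simp add: mult.commute)
  then show ?thesis
    by (simp add: mv_kron[OF assms] mv_scale)
qed

lemma mv_mv_swap:
  "mv J B (\<lambda>j'. mv I C (\<lambda>i''. h i'' j') i') j = mv I C (\<lambda>i''. mv J B (\<lambda>j'. h i'' j') j) i'"
  by (auto simp: mv_def sum_distrib_left mult.left_commute intro: sum.swap)

lemma mv_kron_mv_kron:
  assumes fin: "finite I" "finite J"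
    and AC: "\<forall>v\<in>vecs I. mv I A (mv I C v) = (\<lambda>i. a * mv I A' v i)"
    and BD: "\<forall>v\<in>vecs J. mv J B (mv J D v) = (\<lambda>j. b * mv J B' v j)"
    and w: "w \<in> vecs (I \<times> J)"
  shows "mv (I \<times> J) (kron A B) (mv (I \<times> J) (kron C D) w) = (\<lambda>p. (a * b) * mv (I \<times> J) (kron A' B') w p)"
proof (rule ext, clarify)
  fix i j
  define h where "h = (\<lambda>i''. mv J B (\<lambda>j'. mv J D (\<lambda>j''. w (i'',j'')) j') j)"
  have row: "(\<lambda>j''. w (i'',j'')) \<in> vecs J" for i''
    using w by (auto simp: vecs_def)
  have h: "h = (\<lambda>i''. b * mv J B' (\<lambda>j''. w (i'',j'')) j)"
    unfolding h_def using BD row by auto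
  have "h \<in> vecs I"
    using w by (auto simp: h vecs_def mv_def)
  have "mv (I \<times> J) (kron A B) (mv (I \<times> J) (kron C D) w) (i,j)
      = mv I A (\<lambda>i'. mv J B (\<lambda>j'. mv I C (\<lambda>i''. mv J D (\<lambda>j''. w (i'',j'')) j') i') j) i"
    by (simp add: mv_kron[OF fin])
  also have "\<dots> = mv I A (mv I C h) i"
    unfolding h_def by (rule arg_cong[where f="\<lambda>g. mv I A g i"], rule ext, rule mv_mv_swap)
  also have "\<dots> = a * mv I A' h i"
    using AC \<open>h \<in> vecs I\<close> by metis
  also have "\<dots> = (a * b) * mv (I \<times> J) (kron A' B') w (i,j)"
    unfolding h mv_scale by (simp add: mv_kron[OF fin])
  finally show "mv (I \<times> J) (kron A B) (mv (I \<times> J) (kron C D) w) (i,j)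
      = (a * b) * mv (I \<times> J) (kron A' B') w (i,j)" .
qed

section \<open>Images of idempotent matrices\<close>

lemma fixed_in_image: "v \<in> vecs I \<Longrightarrow> mv I A v = v \<Longrightarrow> v \<in> mv I A ` vecs I"
  by (rule image_eqI[OF sym])

lemma image_idem_iff:
  assumes "idem_on I P"
  shows "u \<in> mv I P ` vecs I \<longleftrightarrow> u \<in> vecs I \<and> mv I P u = u"
  using assms mv_in_vecs fixed_in_image unfolding idem_on_def by blast

lemma idem_on_kron:
  assumes "finite I" "finite J" "idem_on I P" "idem_on J Q"
  shows "idem_on (I \<times> J) (kron P Q)"
  using mv_kron_mv_kron[OF assms(1,2), of P P 1 P Q Q 1 Q] assms(3,4)
  unfolding idem_on_def by simp

lemma lin_span_lincomb:
  assumes "finite X" "\<forall>q\<in>X. g q \<in> S"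
  shows "(\<lambda>p. \<Sum>q\<in>X. c q * g q p) \<in> lin_span S"
proof -
  define d where "d t = (\<Sum>q\<in>{q\<in>X. g q = t}. c q)" for t
  have "(\<lambda>p. \<Sum>q\<in>X. c q * g q p) = (\<lambda>p. \<Sum>t\<in>g ` X. d t * t p)"
  proof (rule ext)
    fix p
    have "(\<Sum>q\<in>X. c q * g q p) = (\<Sum>t\<in>g ` X. \<Sum>q\<in>{q\<in>X. g q = t}. c q * g q p)"
      by (rule sum.image_gen[OF assms(1)])
    also have "\<dots> = (\<Sum>t\<in>g ` X. d t * t p)"
      unfolding d_def sum_distrib_right by (intro sum.cong refl) auto
    finally show "(\<Sum>q\<in>X. c q * g q p) = (\<Sum>t\<in>g ` X. d t * t p)" .
  qed
  then show ?thesis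
    unfolding lin_span_def using assms by blast
qed

lemma tensor_sub_induct [consumes 1, case_names lincomb]:
  assumes "t \<in> tensor_sub U W"
    and "\<And>T c. finite T \<Longrightarrow> (\<And>s. s \<in> T \<Longrightarrow> \<exists>u\<in>U. \<exists>w\<in>W. s = (\<lambda>(i,j). u i * w j))
           \<Longrightarrow> P (\<lambda>p. \<Sum>s\<in>T. c s * s p)"
  shows "P t"
proof -
  obtain T c where t: "t = (\<lambda>p. \<Sum>s\<in>T. c s * s p)" and "finite T"
    and T: "T \<subseteq> {(\<lambda>(i,j). u i * w j) | u w. u \<in> U \<and> w \<in> W}"
    using assms(1) unfolding tensor_sub_def lin_span_def by blast
  show ?thesis
    unfolding t using \<open>finite T\<close> by (rule assms(2)) (use T in blast)
qed

lemma mv_kron_in_tensor_sub: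
  assumes fin: "finite I" "finite J" and w: "w \<in> vecs (I \<times> J)"
  shows "mv (I \<times> J) (kron A B) w \<in> tensor_sub (mv I A ` vecs I) (mv J B ` vecs J)"
proof -
  define g where "g q = (\<lambda>(i,j). mv I A (unit_vec (fst q)) i * mv J B (unit_vec (snd q)) j)"
    for q :: "'a \<times> 'b"
  have "mv (I \<times> J) (kron A B) (unit_vec q) = g q" for q
  proof -
    have "mv (I \<times> J) (kron A B) (unit_vec q)
        = mv (I \<times> J) (kron A B) (\<lambda>(i,j). unit_vec (fst q) i * unit_vec (snd q) j)"
      by (rule arg_cong[where f="mv (I \<times> J) (kron A B)"]) (auto simp: unit_vec_def prod_eq_iff)
    also have "\<dots> = g q"
      unfolding g_def by (rule mv_kron_product[OF fin])
    finally show ?thesis .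
  qed
  then have "mv (I \<times> J) (kron A B) w = (\<lambda>p. \<Sum>q\<in>I \<times> J. w q * g q p)"
    by (simp only: mv_expansion[OF finite_cartesian_product[OF fin] w])
  moreover have "g q \<in> {(\<lambda>(i,j). u i * w j) | u w. u \<in> mv I A ` vecs I \<and> w \<in> mv J B ` vecs J}"
    if "q \<in> I \<times> J" for q
  proof -
    have "unit_vec (fst q) \<in> vecs I" "unit_vec (snd q) \<in> vecs J"
      using that by (auto intro: unit_vec_in_vecs)
    then show ?thesis
      unfolding g_def
      by (intro CollectI exI[of _ "mv I A (unit_vec (fst q))"] exI[of _ "mv J B (unit_vec (snd q))"]
          conjI refl imageI)
  qed
  ultimately show ?thesis
    unfolding tensor_sub_def using fin by (auto intro: lin_span_lincomb)
qed

lemma tensor_sub_image_kron: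
  assumes fin: "finite I" "finite J" and P: "idem_on I P" and Q: "idem_on J Q"
  shows "tensor_sub (mv I P ` vecs I) (mv J Q ` vecs J) = mv (I \<times> J) (kron P Q) ` vecs (I \<times> J)"
proof
  show "mv (I \<times> J) (kron P Q) ` vecs (I \<times> J) \<subseteq> tensor_sub (mv I P ` vecs I) (mv J Q ` vecs J)"
    using mv_kron_in_tensor_sub[OF fin] by blast
next
  show "tensor_sub (mv I P ` vecs I) (mv J Q ` vecs J) \<subseteq> mv (I \<times> J) (kron P Q) ` vecs (I \<times> J)"
  proof
    fix t assume "t \<in> tensor_sub (mv I P ` vecs I) (mv J Q ` vecs J)"
    then show "t \<in> mv (I \<times> J) (kron P Q) ` vecs (I \<times> J)"
    proof (induction rule: tensor_sub_induct)
      case (lincomb T c)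
      have fixed: "s \<in> vecs (I \<times> J) \<and> mv (I \<times> J) (kron P Q) s = s" if sT: "s \<in> T" for s
      proof -
        obtain u w where uw: "u \<in> mv I P ` vecs I" "w \<in> mv J Q ` vecs J"
          and s: "s = (\<lambda>(i,j). u i * w j)"
          using lincomb.hyps(2)[OF sT] by blast
        have "u \<in> vecs I" "mv I P u = u" "w \<in> vecs J" "mv J Q w = w"
          using uw unfolding image_idem_iff[OF P] image_idem_iff[OF Q] by simp_all
        then show ?thesis
          unfolding s by (auto simp: mv_kron_product[OF fin] vecs_def)
      qed
      then have zero: "s p = 0" if "s \<in> T" "p \<notin> I \<times> J" for s p
        using that unfolding vecs_def by blast
      have "(\<lambda>p. \<Sum>s\<in>T. c s * s p) \<in> vecs (I \<times> J)"
        unfolding vecs_def by (intro CollectI allI impI sum.neutral ballI) (simp add: zero)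
      moreover have "mv (I \<times> J) (kron P Q) (\<lambda>p. \<Sum>s\<in>T. c s * s p) = (\<lambda>p. \<Sum>s\<in>T. c s * s p)"
        using fixed by (simp add: mv_lincomb)
      ultimately show ?case
        unfolding image_idem_iff[OF idem_on_kron[OF fin P Q]] ..
    qed
  qed
qed

lemma orthogonal_idempotents_sum:
  fixes A :: "'g \<Rightarrow> 'x \<Rightarrow> 'x \<Rightarrow> 'k::comm_ring_1"
  assumes S: "finite S"
    and orth: "\<And>y y' w. y \<in> S \<Longrightarrow> y' \<in> S \<Longrightarrow> w \<in> vecs X \<Longrightarrow>
      mv X (A y) (mv X (A y') w) = (\<lambda>p. if y = y' then mv X (A y) w p else 0)"
    and u: "\<forall>y\<in>S. u y \<in> mv X (A y) ` vecs X"
  shows "\<And>y. y \<in> S \<Longrightarrow> mv X (A y) (\<lambda>p. \<Sum>y'\<in>S. u y' p) = u y"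
    and "(\<lambda>p. \<Sum>y\<in>S. u y p) \<in> mv X (\<lambda>p q. \<Sum>y\<in>S. A y p q) ` vecs X"
proof -
  have "\<forall>y\<in>S. \<exists>w. w \<in> vecs X \<and> u y = mv X (A y) w"
    using u by blast
  then obtain w where "\<forall>y\<in>S. w y \<in> vecs X \<and> u y = mv X (A y) (w y)"
    by (rule bchoice[THEN exE])
  then have w: "\<And>y. y \<in> S \<Longrightarrow> w y \<in> vecs X" "\<And>y. y \<in> S \<Longrightarrow> u y = mv X (A y) (w y)"
    by simp_all
  have usum: "(\<lambda>p. \<Sum>y\<in>S. u y p) = (\<lambda>p. \<Sum>y\<in>S. mv X (A y) (w y) p)"
    using w(2) by (intro ext sum.cong) auto
  show component: "mv X (A y) (\<lambda>p. \<Sum>y'\<in>S. u y' p) = u y" if "y \<in> S" for y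
    unfolding usum using that S w by (simp add: mv_sum orth)
  have "mv X (A y) (w y) i = 0" if "i \<notin> X" for y i
    using mv_in_vecs[of X "A y" "w y"] that unfolding vecs_def by blast
  then have "(\<lambda>p. \<Sum>y\<in>S. u y p) \<in> vecs X"
    unfolding usum vecs_def by simp
  moreover have "mv X (\<lambda>p q. \<Sum>y\<in>S. A y p q) (\<lambda>p. \<Sum>y\<in>S. u y p) = (\<lambda>p. \<Sum>y\<in>S. u y p)"
    using component by (simp add: mv_mat_sum)
  ultimately show "(\<lambda>p. \<Sum>y\<in>S. u y p) \<in> mv X (\<lambda>p q. \<Sum>y\<in>S. A y p q) ` vecs X"
    by (rule fixed_in_image)
qed

lemma orthogonal_idempotents_decomposition:
  fixes A :: "'g \<Rightarrow> 'x \<Rightarrow> 'x \<Rightarrow> 'k::comm_ring_1"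
  assumes S: "finite S"
    and orth: "\<And>y y' w. y \<in> S \<Longrightarrow> y' \<in> S \<Longrightarrow> w \<in> vecs X \<Longrightarrow>
      mv X (A y) (mv X (A y') w) = (\<lambda>p. if y = y' then mv X (A y) w p else 0)"
  shows "bij_betw (\<lambda>v (y,p). if y \<in> S then mv X (A y) v p else 0)
           (mv X (\<lambda>p q. \<Sum>y\<in>S. A y p q) ` vecs X)
           {s. (\<forall>y p. y \<notin> S \<longrightarrow> s (y,p) = 0) \<and> (\<forall>y\<in>S. (\<lambda>p. s (y,p)) \<in> mv X (A y) ` vecs X)}"
    (is "bij_betw ?F ?V ?W")
proof -
  have recompose: "v = (\<lambda>p. \<Sum>y\<in>S. mv X (A y) v p)" if "v \<in> ?V" for v
  proof -
    obtain w where "w \<in> vecs X" and v: "v = (\<lambda>p. \<Sum>y\<in>S. mv X (A y) w p)"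
      using \<open>v \<in> ?V\<close> by (auto simp: mv_mat_sum)
    then have "mv X (A y) v = mv X (A y) w" if "y \<in> S" for y
      using orthogonal_idempotents_sum(1)[OF S orth _ that, of "\<lambda>y. mv X (A y) w"] by auto
    with v show ?thesis
      by simp
  qed
  have "inj_on ?F ?V"
  proof (rule inj_onI)
    fix v v' assume "v \<in> ?V" "v' \<in> ?V" and "?F v = ?F v'"
    then have "mv X (A y) v = mv X (A y) v'" if "y \<in> S" for y
      using that by (auto dest!: fun_cong[where x="(y, _)"] intro!: ext)
    then show "v = v'"
      using recompose[OF \<open>v \<in> ?V\<close>] recompose[OF \<open>v' \<in> ?V\<close>] by simp
  qed
  moreover have "?F ` ?V \<subseteq> ?W"
    by (auto simp: mv_in_vecs)
  moreover have "s \<in> ?F ` ?V" if "s \<in> ?W" for s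
  proof -
    have slices: "\<forall>y\<in>S. (\<lambda>p. s (y,p)) \<in> mv X (A y) ` vecs X"
      using that by blast
    define v where "v = (\<lambda>p. \<Sum>y\<in>S. s (y,p))"
    have "?F v = s"
      using orthogonal_idempotents_sum(1)[OF S orth slices] that
      by (auto simp: v_def dest: fun_cong)
    moreover have "v \<in> ?V"
      unfolding v_def by (rule orthogonal_idempotents_sum(2)[OF S orth slices])
    ultimately show ?thesis
      by blast
  qed
  ultimately show ?thesis
    unfolding bij_betw_def by blast
qed

lemma image_idem_lincomb:
  assumes P: "idem_on I P" and g: "\<forall>s\<in>S. g s \<in> mv I P ` vecs I"
  shows "(\<lambda>p. \<Sum>s\<in>S. c s * g s p) \<in> mv I P ` vecs I"
proof -
  have "g s \<in> vecs I" "mv I P (g s) = g s" if "s \<in> S" for s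
    using g that unfolding image_idem_iff[OF P] by simp_all
  then show ?thesis
    unfolding image_idem_iff[OF P] by (simp add: mv_lincomb vecs_def)
qed

lemma image_idem_add:
  assumes P: "idem_on I P" and "u \<in> mv I P ` vecs I" "w \<in> mv I P ` vecs I"
  shows "(\<lambda>p. u p + w p) \<in> mv I P ` vecs I"
  using assms(2,3) unfolding image_idem_iff[OF P] by (simp add: mv_add vecs_def)

lemma image_idem_scale:
  assumes P: "idem_on I P" and "u \<in> mv I P ` vecs I"
  shows "(\<lambda>p. c * u p) \<in> mv I P ` vecs I"
  using assms(2) unfolding image_idem_iff[OF P] by (simp add: mv_scale vecs_def)

lemma lin_functional_lincomb:
  assumes P: "idem_on I P" and f: "lin_functional (mv I P ` vecs I) f"
    and "finite S" "\<forall>s\<in>S. g s \<in> mv I P ` vecs I"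
  shows "f (\<lambda>p. \<Sum>s\<in>S. c s * g s p) = (\<Sum>s\<in>S. c s * f (g s))"
proof -
  have add: "\<And>u w. u \<in> mv I P ` vecs I \<Longrightarrow> w \<in> mv I P ` vecs I \<Longrightarrow> f (\<lambda>p. u p + w p) = f u + f w"
    and scale: "\<And>a u. u \<in> mv I P ` vecs I \<Longrightarrow> f (\<lambda>p. a * u p) = a * f u"
    using f unfolding lin_functional_def by blast+
  show ?thesis
    using assms(3,4)
  proof (induction S rule: finite_induct)
    case empty
    have "f (\<lambda>p. 0 * mv I P (\<lambda>_. 0) p) = 0 * f (mv I P (\<lambda>_. 0))"
      by (rule scale) (simp add: vecs_def)
    then show ?case
      by simp
  next
    case (insert a S)
    have "(\<lambda>p. c a * g a p) \<in> mv I P ` vecs I" "(\<lambda>p. \<Sum>s\<in>S. c s * g s p) \<in> mv I P ` vecs I"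
      using insert.prems by (simp_all add: image_idem_scale[OF P] image_idem_lincomb[OF P])
    then have "f (\<lambda>p. c a * g a p + (\<Sum>s\<in>S. c s * g s p))
        = f (\<lambda>p. c a * g a p) + f (\<lambda>p. \<Sum>s\<in>S. c s * g s p)"
      by (rule add)
    also have "\<dots> = c a * f (g a) + (\<Sum>s\<in>S. c s * f (g s))"
      using insert scale by simp
    finally show ?case
      using insert.hyps by simp
  qed
qed

lemma image_transpose_coord:
  assumes fin: "finite I" and P: "idem_on I P"
    and v: "v \<in> mv I (\<lambda>i j. P j i) ` vecs I" and j: "j \<in> I"
  shows "v j = (\<Sum>i\<in>I. v i * mv I P (unit_vec j) i)"
proof -
  obtain v0 where v0: "v = mv I (\<lambda>i j. P j i) v0"
    using v by blast
  have "(\<Sum>i\<in>I. v i * mv I P (unit_vec j) i) = (\<Sum>k\<in>I. v0 k * mv I P (mv I P (unit_vec j)) k)"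
    by (simp add: v0 sum_mv_transpose_one)
  also have "\<dots> = (\<Sum>k\<in>I. v0 k * P k j)"
    by (simp add: idem_onD[OF P unit_vec_in_vecs[OF j]] mv_unit_vec[OF fin j])
  also have "\<dots> = v j"
    using j by (simp add: v0 mv_def mult.commute)
  finally show ?thesis ..
qed

lemma lin_functional_image_idem_represented:
  assumes fin: "finite I" and P: "idem_on I P" and phi: "lin_functional (mv I P ` vecs I) phi"
  obtains v where "v \<in> mv I (\<lambda>i j. P j i) ` vecs I"
    and "\<And>w. w \<in> vecs I \<Longrightarrow> (\<Sum>i\<in>I. v i * w i) = phi (mv I P w)"
proof
  define v where "v j = (if j \<in> I then phi (mv I P (unit_vec j)) else 0)" for j
  show eval: "(\<Sum>i\<in>I. v i * w i) = phi (mv I P w)" if "w \<in> vecs I" for w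
  proof -
    have "phi (mv I P w) = phi (\<lambda>p. \<Sum>i\<in>I. w i * mv I P (unit_vec i) p)"
      using mv_expansion[OF fin that] by simp
    also have "\<dots> = (\<Sum>i\<in>I. w i * phi (mv I P (unit_vec i)))"
      by (intro lin_functional_lincomb[OF P phi fin] ballI imageI unit_vec_in_vecs)
    finally show ?thesis
      unfolding v_def by (simp add: mult.commute)
  qed
  have "mv I (\<lambda>i j. P j i) v = v"
  proof
    fix j
    show "mv I (\<lambda>i j. P j i) v j = v j"
    proof (cases "j \<in> I")
      case True
      have "mv I (\<lambda>i j. P j i) v j = (\<Sum>i\<in>I. v i * P i j)"
        using True by (simp add: mv_def mult.commute)
      also have "\<dots> = (\<Sum>i\<in>I. v i * mv I P (unit_vec j) i)"
        by (simp add: mv_unit_vec[OF fin True])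
      also have "\<dots> = phi (mv I P (mv I P (unit_vec j)))"
        by (rule eval[OF mv_in_vecs])
      also have "\<dots> = v j"
        using True by (simp add: idem_onD[OF P unit_vec_in_vecs[OF True]] v_def)
      finally show ?thesis .
    qed (simp add: mv_def v_def)
  qed
  moreover have "v \<in> vecs I"
    by (simp add: v_def vecs_def)
  ultimately show "v \<in> mv I (\<lambda>i j. P j i) ` vecs I"
    by (rule fixed_in_image[rotated])
qed

lemma dual_space_image_idem:
  assumes fin: "finite I" and P: "idem_on I P"
  shows "bij_betw (\<lambda>v u. if u \<in> mv I P ` vecs I then \<Sum>i\<in>I. v i * u i else 0)
           (mv I (\<lambda>i j. P j i) ` vecs I) (dual_space (mv I P ` vecs I))"
    (is "bij_betw _ ?V (dual_space ?U)")
proof -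
  define pair where "pair v u = (if u \<in> ?U then \<Sum>i\<in>I. v i * u i else 0)" for v u
  have coord: "v j = pair v (mv I P (unit_vec j))" if "v \<in> ?V" "j \<in> I" for v j
    using image_transpose_coord[OF fin P that] imageI[OF unit_vec_in_vecs[OF that(2)], of "mv I P"]
    by (simp add: pair_def)
  have "inj_on pair ?V"
  proof (rule inj_onI)
    fix v v' assume "v \<in> ?V" "v' \<in> ?V" "pair v = pair v'"
    moreover have "v \<in> vecs I" "v' \<in> vecs I"
      using \<open>v \<in> ?V\<close> \<open>v' \<in> ?V\<close> mv_in_vecs by blast+
    ultimately have "v j = v' j" for j
      using coord by (cases "j \<in> I") (metis, simp add: vecs_def)
    then show "v = v'" ..
  qed
  moreover have "pair ` ?V \<subseteq> dual_space ?U"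
    using image_idem_add[OF P] image_idem_scale[OF P]
    by (auto simp: pair_def dual_space_def lin_functional_def distrib_left distrib_right sum.distrib
        sum_distrib_left mult.left_commute)
  moreover have "phi \<in> pair ` ?V" if "phi \<in> dual_space ?U" for phi
  proof -
    have lin: "lin_functional ?U phi" and zero: "\<And>u. u \<notin> ?U \<Longrightarrow> phi u = 0"
      using that unfolding dual_space_def by blast+
    obtain v where "v \<in> ?V" and eval: "\<And>w. w \<in> vecs I \<Longrightarrow> (\<Sum>i\<in>I. v i * w i) = phi (mv I P w)"
      using lin_functional_image_idem_represented[OF fin P lin] by blast
    have "pair v = phi"
    proof
      fix u
      show "pair v u = phi u"
        using eval zero image_idem_iff[OF P, of u] by (auto simp: pair_def)
    qed
    with \<open>v \<in> ?V\<close> show "phi \<in> pair ` ?V"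
      by blast
  qed
  ultimately show ?thesis
    unfolding bij_betw_def pair_def[abs_def] by blast
qed

lemma idempotent_nonzero_eq_one: "(s::'a::field) \<noteq> 0 \<Longrightarrow> s * s = s \<Longrightarrow> s = 1"
  by (metis mult_cancel_left1)

locale crossed_coproduct =
  fixes L :: "('l,'e1) monoid_scheme" and G :: "('g,'e2) monoid_scheme"
    and act :: "'g \<Rightarrow> 'l \<Rightarrow> 'l" and sig :: "'g \<Rightarrow> 'l \<Rightarrow> 'l \<Rightarrow> 'k::field"
    and tau :: "'g \<Rightarrow> 'g \<Rightarrow> 'l \<Rightarrow> 'k"
  assumes data: "crossed_coproduct_data L G act sig tau"
begin

sublocale L: group L
  using data by (simp add: crossed_coproduct_data_def)

sublocale G: group G
  using data by (simp add: crossed_coproduct_data_def)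

lemma finite_carrier_G: "finite (carrier G)"
  using data by (simp add: crossed_coproduct_data_def)

lemma act_group_hom: "y \<in> carrier G \<Longrightarrow> group_hom L L (act y)"
  using data by (simp add: crossed_coproduct_data_def group_hom_def group_hom_axioms_def)

lemma act_closed: "y \<in> carrier G \<Longrightarrow> l \<in> carrier L \<Longrightarrow> act y l \<in> carrier L"
  by (rule group_hom.hom_closed[OF act_group_hom])

lemma act_one: "y \<in> carrier G \<Longrightarrow> act y \<one>\<^bsub>L\<^esub> = \<one>\<^bsub>L\<^esub>"
  by (rule group_hom.hom_one[OF act_group_hom])

lemma act_inv: "y \<in> carrier G \<Longrightarrow> l \<in> carrier L \<Longrightarrow> act y (inv\<^bsub>L\<^esub> l) = inv\<^bsub>L\<^esub> (act y l)"
  by (rule group_hom.hom_inv[OF act_group_hom])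

lemma act_mult:
  "y \<in> carrier G \<Longrightarrow> l \<in> carrier L \<Longrightarrow> m \<in> carrier L \<Longrightarrow> act y (l \<otimes>\<^bsub>L\<^esub> m) = act y l \<otimes>\<^bsub>L\<^esub> act y m"
  by (rule group_hom.hom_mult[OF act_group_hom])

lemma act_unit: "l \<in> carrier L \<Longrightarrow> act \<one>\<^bsub>G\<^esub> l = l"
  using data by (simp add: crossed_coproduct_data_def)

lemma sig_nonzero: "x \<in> carrier G \<Longrightarrow> l \<in> carrier L \<Longrightarrow> m \<in> carrier L \<Longrightarrow> sig x l m \<noteq> 0"
  using data unfolding crossed_coproduct_data_def by (elim conjE) blast

lemma sig_one_left: "x \<in> carrier G \<Longrightarrow> l \<in> carrier L \<Longrightarrow> sig x \<one>\<^bsub>L\<^esub> l = 1"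
  using data unfolding crossed_coproduct_data_def by (elim conjE) blast

lemma sig_one_right: "x \<in> carrier G \<Longrightarrow> l \<in> carrier L \<Longrightarrow> sig x l \<one>\<^bsub>L\<^esub> = 1"
  using data unfolding crossed_coproduct_data_def by (elim conjE) blast

lemma tau_nonzero: "x \<in> carrier G \<Longrightarrow> y \<in> carrier G \<Longrightarrow> l \<in> carrier L \<Longrightarrow> tau x y l \<noteq> 0"
  using data unfolding crossed_coproduct_data_def by (elim conjE) blast

lemma tau_one_left: "x \<in> carrier G \<Longrightarrow> l \<in> carrier L \<Longrightarrow> tau \<one>\<^bsub>G\<^esub> x l = 1"
  using data unfolding crossed_coproduct_data_def by (elim conjE) simp

lemma sig_tau_compat:
  "x \<in> carrier G \<Longrightarrow> y \<in> carrier G \<Longrightarrow> l \<in> carrier L \<Longrightarrow> m \<in> carrier L \<Longrightarrow>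
    sig (x \<otimes>\<^bsub>G\<^esub> y) l m * tau x y (l \<otimes>\<^bsub>L\<^esub> m)
      = sig x l m * sig y (act (inv\<^bsub>G\<^esub> x) l) (act (inv\<^bsub>G\<^esub> x) m) * tau x y l * tau x y m"
  using data unfolding crossed_coproduct_data_def by (elim conjE) simp

text \<open>The normalizations sigma_1 = 1 and tau(1) = 1 are not among the axioms; they follow from
  the compatibility condition, since a nonzero idempotent of a field is 1.\<close>

lemma sig_index_one:
  assumes "l \<in> carrier L" "m \<in> carrier L"
  shows "sig \<one>\<^bsub>G\<^esub> l m = 1"
proof (rule idempotent_nonzero_eq_one)
  show "sig \<one>\<^bsub>G\<^esub> l m \<noteq> 0"
    using assms by (simp add: sig_nonzero)
  show "sig \<one>\<^bsub>G\<^esub> l m * sig \<one>\<^bsub>G\<^esub> l m = sig \<one>\<^bsub>G\<^esub> l m"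
    using sig_tau_compat[OF G.one_closed G.one_closed assms] assms
    by (simp add: tau_one_left act_unit)
qed

lemma tau_at_one:
  assumes "y \<in> carrier G" "z \<in> carrier G"
  shows "tau y z \<one>\<^bsub>L\<^esub> = 1"
proof (rule idempotent_nonzero_eq_one)
  show "tau y z \<one>\<^bsub>L\<^esub> \<noteq> 0"
    using assms by (simp add: tau_nonzero)
  show "tau y z \<one>\<^bsub>L\<^esub> * tau y z \<one>\<^bsub>L\<^esub> = tau y z \<one>\<^bsub>L\<^esub>"
    using sig_tau_compat[OF assms L.one_closed L.one_closed] assms
    by (simp add: sig_one_left act_one)
qed

text \<open>The scalar in the antipode S(l # p_x), rewritten through the compatibility
  condition at (x, x^-1) and (l^-1, l).\<close>

lemma antipode_scalar:
  assumes x: "x \<in> carrier G" and l: "l \<in> carrier L"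
  shows "tau x (inv\<^bsub>G\<^esub> x) (inv\<^bsub>L\<^esub> l) * sig x (inv\<^bsub>L\<^esub> l) l
       = inverse (tau x (inv\<^bsub>G\<^esub> x) l)
         * inverse (sig (inv\<^bsub>G\<^esub> x) (act (inv\<^bsub>G\<^esub> x) (inv\<^bsub>L\<^esub> l)) (act (inv\<^bsub>G\<^esub> x) l))"
proof -
  have "1 = sig x (inv\<^bsub>L\<^esub> l) l * sig (inv\<^bsub>G\<^esub> x) (act (inv\<^bsub>G\<^esub> x) (inv\<^bsub>L\<^esub> l)) (act (inv\<^bsub>G\<^esub> x) l)
       * tau x (inv\<^bsub>G\<^esub> x) (inv\<^bsub>L\<^esub> l) * tau x (inv\<^bsub>G\<^esub> x) l"
    using sig_tau_compat[OF x G.inv_closed[OF x] L.inv_closed[OF l] l] x l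
    by (simp add: sig_index_one tau_at_one)
  moreover have "tau x (inv\<^bsub>G\<^esub> x) l \<noteq> 0"
    "sig (inv\<^bsub>G\<^esub> x) (act (inv\<^bsub>G\<^esub> x) (inv\<^bsub>L\<^esub> l)) (act (inv\<^bsub>G\<^esub> x) l) \<noteq> 0"
    using x l by (simp_all add: tau_nonzero sig_nonzero act_closed)
  ultimately show ?thesis
    by (simp add: field_simps)
qed

end

locale crossed_coproduct_module = crossed_coproduct L G act sig tau
  for L :: "('l,'e1) monoid_scheme" and G :: "('g,'e2) monoid_scheme"
    and act :: "'g \<Rightarrow> 'l \<Rightarrow> 'l" and sig :: "'g \<Rightarrow> 'l \<Rightarrow> 'l \<Rightarrow> 'k::field"
    and tau :: "'g \<Rightarrow> 'g \<Rightarrow> 'l \<Rightarrow> 'k" +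
  fixes I :: "'a set" and rho :: "'l \<Rightarrow> 'g \<Rightarrow> 'a \<Rightarrow> 'a \<Rightarrow> 'k"
  assumes module: "K_module L G sig I rho"
begin

lemma finite_index: "finite I"
  using module by (simp add: K_module_def)

lemma rho_mult:
  assumes "l \<in> carrier L" "m \<in> carrier L" "x \<in> carrier G" "y \<in> carrier G" "v \<in> vecs I"
  shows "mv I (rho l x) (mv I (rho m y) v)
       = (\<lambda>i. (if x = y then sig x l m else 0) * mv I (rho (l \<otimes>\<^bsub>L\<^esub> m) x) v i)"
proof -
  have "mv I (rho l x) (mv I (rho m y) v)
      = (if x = y then (\<lambda>i. sig x l m * mv I (rho (l \<otimes>\<^bsub>L\<^esub> m) x) v i) else (\<lambda>i. 0))"
    using module assms unfolding K_module_def by blast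
  then show ?thesis
    by (cases "x = y") simp_all
qed

lemma rho_one_mult:
  assumes "l \<in> carrier L" "x \<in> carrier G" "y \<in> carrier G" "v \<in> vecs I"
  shows "mv I (rho \<one>\<^bsub>L\<^esub> x) (mv I (rho l y) v) = (\<lambda>i. if x = y then mv I (rho l x) v i else 0)"
  using rho_mult[OF L.one_closed assms] assms by (simp add: sig_one_left)

lemma idem_on_rho_one: "x \<in> carrier G \<Longrightarrow> idem_on I (rho \<one>\<^bsub>L\<^esub> x)"
  unfolding idem_on_def by (simp add: rho_one_mult)

section \<open>Components of the dual module\<close>

lemma rho_in_comp_space:
  assumes "l \<in> carrier L" "x \<in> carrier G" "v \<in> vecs I"
  shows "mv I (rho l x) v \<in> comp_space L I rho x"
proof -
  have "mv I (rho l x) v = mv I (rho \<one>\<^bsub>L\<^esub> x) (mv I (rho l x) v)"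
    using assms by (simp add: rho_one_mult)
  then show ?thesis
    unfolding comp_space_def by (blast intro: mv_in_vecs)
qed

lemma dual_rho_one:
  "x \<in> carrier G \<Longrightarrow> dual_rho L G act sig tau rho \<one>\<^bsub>L\<^esub> x = (\<lambda>i j. rho \<one>\<^bsub>L\<^esub> (inv\<^bsub>G\<^esub> x) j i)"
  by (simp add: dual_rho_def tau_at_one sig_one_left act_one)

lemma pairing_dual_rho:
  assumes x: "x \<in> carrier G" and l: "l \<in> carrier L" and m: "m = act (inv\<^bsub>G\<^esub> x) l"
  shows "(\<Sum>i\<in>I. mv I (dual_rho L G act sig tau rho l x) v i * u i)
       = inverse (tau x (inv\<^bsub>G\<^esub> x) l) * (\<Sum>i\<in>I. v i *
           (inverse (sig (inv\<^bsub>G\<^esub> x) (inv\<^bsub>L\<^esub> m) m) * mv I (rho (inv\<^bsub>L\<^esub> m) (inv\<^bsub>G\<^esub> x)) u i))"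
proof -
  have "inv\<^bsub>L\<^esub> m = act (inv\<^bsub>G\<^esub> x) (inv\<^bsub>L\<^esub> l)"
    using m x l by (simp add: act_inv)
  then have "(\<Sum>i\<in>I. mv I (dual_rho L G act sig tau rho l x) v i * u i)
      = (tau x (inv\<^bsub>G\<^esub> x) (inv\<^bsub>L\<^esub> l) * sig x (inv\<^bsub>L\<^esub> l) l)
        * (\<Sum>j\<in>I. v j * mv I (rho (inv\<^bsub>L\<^esub> m) (inv\<^bsub>G\<^esub> x)) u j)"
    unfolding dual_rho_def by (simp only: sum_mv_transpose)
  also have "\<dots> = inverse (tau x (inv\<^bsub>G\<^esub> x) l) * (\<Sum>i\<in>I. v i *
      (inverse (sig (inv\<^bsub>G\<^esub> x) (inv\<^bsub>L\<^esub> m) m) * mv I (rho (inv\<^bsub>L\<^esub> m) (inv\<^bsub>G\<^esub> x)) u i))"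
    using antipode_scalar[OF x l] \<open>inv\<^bsub>L\<^esub> m = _\<close> m
    by (simp add: sum_distrib_left mult.left_commute mult.assoc)
  finally show ?thesis .
qed

lemma dual_component_iso:
  assumes x: "x \<in> carrier G"
  shows "tw_iso (carrier L)
           (comp_space L I (dual_rho L G act sig tau rho) x)
           (comp_act I (dual_rho L G act sig tau rho) x)
           (dual_space (comp_space L I rho (inv\<^bsub>G\<^esub> x)))
           (conj_dual_act L G act sig tau I rho x)"
proof -
  define U where "U = comp_space L I rho (inv\<^bsub>G\<^esub> x)"
  define pair where "pair v u = (if u \<in> U then \<Sum>i\<in>I. v i * u i else 0)" for v u :: "'a \<Rightarrow> 'k"
  have xi: "inv\<^bsub>G\<^esub> x \<in> carrier G"
    using x by simp
  have "bij_betw pair (comp_space L I (dual_rho L G act sig tau rho) x) (dual_space U)"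
    using dual_space_image_idem[OF finite_index idem_on_rho_one[OF xi]]
    unfolding comp_space_def dual_rho_one[OF x] pair_def[abs_def] U_def .
  moreover have "lin_on V pair" for V
    by (auto simp: lin_on_def pair_def distrib_left distrib_right sum.distrib sum_distrib_left
        mult.assoc intro!: ext)
  moreover have "pair (comp_act I (dual_rho L G act sig tau rho) x l v)
      = conj_dual_act L G act sig tau I rho x l (pair v)" if l: "l \<in> carrier L" for l v
  proof
    fix u
    define m where "m = act (inv\<^bsub>G\<^esub> x) l"
    have "m \<in> carrier L"
      unfolding m_def using xi l by (rule act_closed)
    show "pair (comp_act I (dual_rho L G act sig tau rho) x l v) u
        = conj_dual_act L G act sig tau I rho x l (pair v) u"
    proof (cases "u \<in> U")
      case True
      have "(\<lambda>i. inverse (sig (inv\<^bsub>G\<^esub> x) (inv\<^bsub>L\<^esub> m) m) * mv I (rho (inv\<^bsub>L\<^esub> m) (inv\<^bsub>G\<^esub> x)) u i) \<in> U"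
        unfolding U_def comp_space_def
        using rho_in_comp_space[OF L.inv_closed[OF \<open>m \<in> carrier L\<close>] xi] True
        by (intro image_idem_scale[OF idem_on_rho_one[OF xi]])
          (auto simp: U_def comp_space_def mv_in_vecs)
      with True show ?thesis
        by (simp add: pair_def comp_act_def conj_dual_act_def Let_def pairing_dual_rho[OF x l m_def]
            flip: m_def U_def)
    qed (simp add: pair_def conj_dual_act_def Let_def U_def)
  qed
  ultimately show ?thesis
    unfolding tw_iso_def U_def comp_act_def by blast
qed

end

section \<open>Components of the tensor product\<close>

locale crossed_coproduct_module_pair =
  M: crossed_coproduct_module L G act sig tau I rhoM +
  N: crossed_coproduct_module L G act sig tau J rhoN
  for L :: "('l,'e1) monoid_scheme" and G :: "('g,'e2) monoid_scheme"
    and act :: "'g \<Rightarrow> 'l \<Rightarrow> 'l" and sig :: "'g \<Rightarrow> 'l \<Rightarrow> 'l \<Rightarrow> 'k::field"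
    and tau :: "'g \<Rightarrow> 'g \<Rightarrow> 'l \<Rightarrow> 'k"
    and I :: "'a set" and rhoM :: "'l \<Rightarrow> 'g \<Rightarrow> 'a \<Rightarrow> 'a \<Rightarrow> 'k"
    and J :: "'b set" and rhoN :: "'l \<Rightarrow> 'g \<Rightarrow> 'b \<Rightarrow> 'b \<Rightarrow> 'k"
begin

context
  fixes x :: 'g
  assumes x: "x \<in> carrier G"
begin

text \<open>The matrix of the term (l # p_y) \<otimes> ((y^-1 . l) # p_(y^-1 x)) of the coproduct of l # p_x.\<close>

definition tensor_block :: "'l \<Rightarrow> 'g \<Rightarrow> 'a \<times> 'b \<Rightarrow> 'a \<times> 'b \<Rightarrow> 'k" where
  "tensor_block l y = kron (rhoM l y) (rhoN (act (inv\<^bsub>G\<^esub> y) l) (inv\<^bsub>G\<^esub> y \<otimes>\<^bsub>G\<^esub> x))"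

lemma cofactor_closed: "y \<in> carrier G \<Longrightarrow> inv\<^bsub>G\<^esub> y \<otimes>\<^bsub>G\<^esub> x \<in> carrier G"
  using x by simp

lemma cofactor_eq_iff:
  "y \<in> carrier G \<Longrightarrow> y' \<in> carrier G \<Longrightarrow> inv\<^bsub>G\<^esub> y \<otimes>\<^bsub>G\<^esub> x = inv\<^bsub>G\<^esub> y' \<otimes>\<^bsub>G\<^esub> x \<longleftrightarrow> y = y'"
  using x by (metis M.G.inv_closed M.G.inv_inv M.G.right_cancel)

lemma tensor_rho_eq:
  "tensor_rho G act tau rhoM rhoN l x
     = (\<lambda>p q. \<Sum>y\<in>carrier G. tau y (inv\<^bsub>G\<^esub> y \<otimes>\<^bsub>G\<^esub> x) l * tensor_block l y p q)"
  by (intro ext) (auto simp: tensor_rho_def tensor_block_def kron_def mult.assoc)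

lemma tensor_rho_one:
  "tensor_rho G act tau rhoM rhoN \<one>\<^bsub>L\<^esub> x = (\<lambda>p q. \<Sum>y\<in>carrier G. tensor_block \<one>\<^bsub>L\<^esub> y p q)"
  by (simp add: tensor_rho_eq M.tau_at_one cofactor_closed)

lemma tensor_block_mult:
  assumes l: "l \<in> carrier L" and m: "m \<in> carrier L" and y: "y \<in> carrier G" and y': "y' \<in> carrier G"
    and w: "w \<in> vecs (I \<times> J)"
  shows "mv (I \<times> J) (tensor_block l y) (mv (I \<times> J) (tensor_block m y') w)
       = (\<lambda>p. (if y = y' then sig y l m * sig (inv\<^bsub>G\<^esub> y \<otimes>\<^bsub>G\<^esub> x) (act (inv\<^bsub>G\<^esub> y) l) (act (inv\<^bsub>G\<^esub> y) m) else 0)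
            * mv (I \<times> J) (tensor_block (l \<otimes>\<^bsub>L\<^esub> m) y) w p)"
proof -
  define l' m' where "l' = act (inv\<^bsub>G\<^esub> y) l" and "m' = act (inv\<^bsub>G\<^esub> y') m"
  have l'm': "l' \<in> carrier L" "m' \<in> carrier L"
    unfolding l'_def m'_def using y y' l m by (simp_all add: M.act_closed)
  have "\<forall>v\<in>vecs I. mv I (rhoM l y) (mv I (rhoM m y') v)
      = (\<lambda>i. (if y = y' then sig y l m else 0) * mv I (rhoM (l \<otimes>\<^bsub>L\<^esub> m) y) v i)"
    using M.rho_mult[OF l m y y'] by blast
  moreover have "\<forall>v\<in>vecs J. mv J (rhoN l' (inv\<^bsub>G\<^esub> y \<otimes>\<^bsub>G\<^esub> x)) (mv J (rhoN m' (inv\<^bsub>G\<^esub> y' \<otimes>\<^bsub>G\<^esub> x)) v)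
      = (\<lambda>j. (if y = y' then sig (inv\<^bsub>G\<^esub> y \<otimes>\<^bsub>G\<^esub> x) l' m' else 0)
             * mv J (rhoN (l' \<otimes>\<^bsub>L\<^esub> m') (inv\<^bsub>G\<^esub> y \<otimes>\<^bsub>G\<^esub> x)) v j)"
    using N.rho_mult[OF l'm' cofactor_closed[OF y] cofactor_closed[OF y']] cofactor_eq_iff[OF y y']
    by simp
  ultimately have "mv (I \<times> J) (tensor_block l y) (mv (I \<times> J) (tensor_block m y') w)
      = (\<lambda>p. ((if y = y' then sig y l m else 0) * (if y = y' then sig (inv\<^bsub>G\<^esub> y \<otimes>\<^bsub>G\<^esub> x) l' m' else 0))
           * mv (I \<times> J) (kron (rhoM (l \<otimes>\<^bsub>L\<^esub> m) y) (rhoN (l' \<otimes>\<^bsub>L\<^esub> m') (inv\<^bsub>G\<^esub> y \<otimes>\<^bsub>G\<^esub> x))) w p)"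
    unfolding tensor_block_def l'_def[symmetric] m'_def[symmetric]
    by (rule mv_kron_mv_kron[OF M.finite_index N.finite_index _ _ w])
  moreover have "y = y' \<Longrightarrow> l' \<otimes>\<^bsub>L\<^esub> m' = act (inv\<^bsub>G\<^esub> y) (l \<otimes>\<^bsub>L\<^esub> m)"
    unfolding l'_def m'_def using y l m by (simp add: M.act_mult)
  ultimately show ?thesis
    unfolding tensor_block_def l'_def m'_def by (cases "y = y'") simp_all
qed

lemma tensor_block_one_left:
  assumes "l \<in> carrier L" "y \<in> carrier G" "y' \<in> carrier G" "w \<in> vecs (I \<times> J)"
  shows "mv (I \<times> J) (tensor_block \<one>\<^bsub>L\<^esub> y) (mv (I \<times> J) (tensor_block l y') w)
       = (\<lambda>p. if y = y' then mv (I \<times> J) (tensor_block l y) w p else 0)"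
  using tensor_block_mult[OF M.L.one_closed assms] assms
  by (simp add: M.sig_one_left M.act_one M.act_closed cofactor_closed)

lemma tensor_block_one_right:
  assumes "l \<in> carrier L" "y \<in> carrier G" "w \<in> vecs (I \<times> J)"
  shows "mv (I \<times> J) (tensor_block l y) (mv (I \<times> J) (tensor_block \<one>\<^bsub>L\<^esub> y) w)
       = mv (I \<times> J) (tensor_block l y) w"
  using tensor_block_mult[OF assms(1) M.L.one_closed assms(2,2,3)] assms
  by (simp add: M.sig_one_right M.act_one M.act_closed cofactor_closed)

lemma sum_space_eq:
  "sum_space L G I J rhoM rhoN x
     = {s. (\<forall>y p. y \<notin> carrier G \<longrightarrow> s (y,p) = 0)
           \<and> (\<forall>y\<in>carrier G. (\<lambda>p. s (y,p)) \<in> mv (I \<times> J) (tensor_block \<one>\<^bsub>L\<^esub> y) ` vecs (I \<times> J))}"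
proof -
  have "tensor_sub (comp_space L I rhoM y) (comp_space L J rhoN (inv\<^bsub>G\<^esub> y \<otimes>\<^bsub>G\<^esub> x))
      = mv (I \<times> J) (tensor_block \<one>\<^bsub>L\<^esub> y) ` vecs (I \<times> J)" if "y \<in> carrier G" for y
    unfolding comp_space_def tensor_block_def M.act_one[OF M.G.inv_closed[OF that]]
    using that by (intro tensor_sub_image_kron M.finite_index N.finite_index
        M.idem_on_rho_one N.idem_on_rho_one cofactor_closed)
  then show ?thesis
    unfolding sum_space_def by auto
qed

lemma tensor_block_one_tensor_rho:
  assumes l: "l \<in> carrier L" and y: "y \<in> carrier G" and v: "v \<in> vecs (I \<times> J)"
  shows "mv (I \<times> J) (tensor_block \<one>\<^bsub>L\<^esub> y) (mv (I \<times> J) (tensor_rho G act tau rhoM rhoN l x) v)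
       = (\<lambda>p. tau y (inv\<^bsub>G\<^esub> y \<otimes>\<^bsub>G\<^esub> x) l
              * mv (I \<times> J) (tensor_block l y) (mv (I \<times> J) (tensor_block \<one>\<^bsub>L\<^esub> y) v) p)"
proof -
  have "mv (I \<times> J) (tensor_block \<one>\<^bsub>L\<^esub> y) (mv (I \<times> J) (tensor_rho G act tau rhoM rhoN l x) v)
      = (\<lambda>p. \<Sum>y'\<in>carrier G. tau y' (inv\<^bsub>G\<^esub> y' \<otimes>\<^bsub>G\<^esub> x) l
              * mv (I \<times> J) (tensor_block \<one>\<^bsub>L\<^esub> y) (mv (I \<times> J) (tensor_block l y') v) p)"
    by (simp add: tensor_rho_eq mv_mat_lincomb mv_lincomb)
  also have "\<dots> = (\<lambda>p. tau y (inv\<^bsub>G\<^esub> y \<otimes>\<^bsub>G\<^esub> x) l * mv (I \<times> J) (tensor_block l y) v p)"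
    using l y v by (simp add: tensor_block_one_left M.finite_carrier_G if_distrib cong: if_cong)
  finally show ?thesis
    using l y v by (simp add: tensor_block_one_right)
qed

lemma tensor_component_iso:
  "tw_iso (carrier L)
     (comp_space L (I \<times> J) (tensor_rho G act tau rhoM rhoN) x)
     (comp_act (I \<times> J) (tensor_rho G act tau rhoM rhoN) x)
     (sum_space L G I J rhoM rhoN x)
     (sum_act G act tau I J rhoM rhoN x)"
proof -
  define V where "V = comp_space L (I \<times> J) (tensor_rho G act tau rhoM rhoN) x"
  define F where "F v = (\<lambda>(y,p). if y \<in> carrier G then mv (I \<times> J) (tensor_block \<one>\<^bsub>L\<^esub> y) v p else 0)"
    for v
  have "bij_betw F V (sum_space L G I J rhoM rhoN x)"
    unfolding F_def[abs_def] V_def comp_space_def tensor_rho_one sum_space_eq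
    using M.L.one_closed
    by (intro orthogonal_idempotents_decomposition M.finite_carrier_G) (simp add: tensor_block_one_left)
  moreover have "lin_on V F"
    unfolding lin_on_def F_def by (auto simp: mv_add mv_scale)
  moreover have "F (comp_act (I \<times> J) (tensor_rho G act tau rhoM rhoN) x l v)
      = sum_act G act tau I J rhoM rhoN x l (F v)" if l: "l \<in> carrier L" and "v \<in> V" for l v
  proof (intro ext, clarify)
    fix y p
    have "v \<in> vecs (I \<times> J)"
      using \<open>v \<in> V\<close> mv_in_vecs unfolding V_def comp_space_def by blast
    then show "F (comp_act (I \<times> J) (tensor_rho G act tau rhoM rhoN) x l v) (y,p)
        = sum_act G act tau I J rhoM rhoN x l (F v) (y,p)"
      using l by (simp add: F_def sum_act_def comp_act_def tensor_block_one_tensor_rho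
          flip: tensor_block_def)
  qed
  ultimately show ?thesis
    unfolding tw_iso_def V_def comp_act_def by blast
qed

end

end

theorem theorem2p2:
  fixes L :: "('l,'e1) monoid_scheme" and G :: "('g,'e2) monoid_scheme"
    and act :: "'g \<Rightarrow> 'l \<Rightarrow> 'l"
    and sig :: "'g \<Rightarrow> 'l \<Rightarrow> 'l \<Rightarrow> 'k::field"
    and tau :: "'g \<Rightarrow> 'g \<Rightarrow> 'l \<Rightarrow> 'k"
    and I :: "'a set" and rhoM :: "'l \<Rightarrow> 'g \<Rightarrow> 'a \<Rightarrow> 'a \<Rightarrow> 'k"
    and J :: "'b set" and rhoN :: "'l \<Rightarrow> 'g \<Rightarrow> 'b \<Rightarrow> 'b \<Rightarrow> 'k"
    and x :: 'g
  assumes "alg_closed TYPE('k)"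
    and "crossed_coproduct_data L G act sig tau"
    and "K_module L G sig I rhoM"
    and "K_module L G sig J rhoN"
    and "x \<in> carrier G"
  shows "tw_iso (carrier L)
           (comp_space L (I \<times> J) (tensor_rho G act tau rhoM rhoN) x)
           (comp_act (I \<times> J) (tensor_rho G act tau rhoM rhoN) x)
           (sum_space L G I J rhoM rhoN x)
           (sum_act G act tau I J rhoM rhoN x)
         \<and> tw_iso (carrier L)
           (comp_space L I (dual_rho L G act sig tau rhoM) x)
           (comp_act I (dual_rho L G act sig tau rhoM) x)
           (dual_space (comp_space L I rhoM (inv\<^bsub>G\<^esub> x)))
           (conj_dual_act L G act sig tau I rhoM x)"
proof -
  interpret crossed_coproduct_module_pair L G act sig tau I rhoM J rhoN
    using assms(2-4)
    by (simp add: crossed_coproduct_module_pair_def crossed_coproduct_module_def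
        crossed_coproduct_module_axioms_def crossed_coproduct_def)
  show ?thesis
    using tensor_component_iso[OF assms(5)] M.dual_component_iso[OF assms(5)] ..
qed

end
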